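(* Let $V$ be a Whittaker module of type $\eta$ over $R$ with cyclic Whittaker vector $w$, and suppose $Z_V=(p(\Omega)^n)$ where $p$ is an irreducible polynomial and $n\ge1$. Let $V_i=Rp(\Omega)^iw$ for $i=0,\dots,n$ and $S_i=V_i/V_{i+1}$ for $i=0,\dots,n-1$. Then each $S_i$ is an irreducible Whittaker module of type $\eta$, and the $S_i$ are the factors of a composition series $V=V_0\supseteq V_1\supseteq\cdots\supseteq V_n$ of $V$. In particular, $V$ has finite length.
   Context: Let $f\in\mathbb{C}[H]$ be a polynomial. $R=R(f)$ is the associative $\mathbb{C}$-algebra generated by $E,F,H$ with relations $EF-FE=f(H)$, $HE-EH=E$, $HF-FH=-F$. Let $u\in\mathbb{C}[H]$ satisfy $f(H)=\tfrac12(u(H+1)-u(H))$ and $\Omega=2FE+u(H+1)$; the center $Z(R)$ is the polynomial ring $\mathbb{C}[\Omega]$. Let $R(E)=\mathbb{C}[E]$ and fix an algebra homomorphism $\eta:R(E)\to\mathbb{C}$ with $\eta(E)\neq0$. A vector $v$ of an $R$-module $V$ is a Whittaker vector of type $\eta$ if $Ev=\eta(E)v$; $V$ is a Whittaker module of type $\eta$ with cyclic Whittaker vector $w$ if $w$ is a Whittaker vector and $V=Rw$. $Z_V=\mathrm{Ann}_R(V)\cap Z(R)$. *)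

theory Defs
  imports "HOL-Computational_Algebra.Polynomial"
begin

text \<open>An R(f)-module is encoded as a complex vector space (carrier with explicit
operations) together with the actions of the generators E, F, H.\<close>

record 'a rmod =
  carrier :: "'a set"
  zero :: 'a
  add :: "'a \<Rightarrow> 'a \<Rightarrow> 'a"
  smul :: "complex \<Rightarrow> 'a \<Rightarrow> 'a"
  actE :: "'a \<Rightarrow> 'a"
  actF :: "'a \<Rightarrow> 'a"
  actH :: "'a \<Rightarrow> 'a"

text \<open>Action q(T) v of a polynomial q in an operator T (Horner scheme).\<close>
definition polyop :: "('a, 'b) rmod_scheme \<Rightarrow> ('a \<Rightarrow> 'a) \<Rightarrow> complex poly \<Rightarrow> 'a \<Rightarrow> 'a" where
  "polyop M T q v = foldr (\<lambda>a acc. add M (smul M a v) (T acc)) (coeffs q) (zero M)"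

definition vspace :: "('a, 'b) rmod_scheme \<Rightarrow> bool" where
  "vspace M \<longleftrightarrow>
     zero M \<in> carrier M \<and>
     (\<forall>x\<in>carrier M. \<forall>y\<in>carrier M. add M x y \<in> carrier M) \<and>
     (\<forall>a. \<forall>x\<in>carrier M. smul M a x \<in> carrier M) \<and>
     (\<forall>x\<in>carrier M. \<forall>y\<in>carrier M. \<forall>z\<in>carrier M. add M (add M x y) z = add M x (add M y z)) \<and>
     (\<forall>x\<in>carrier M. \<forall>y\<in>carrier M. add M x y = add M y x) \<and>
     (\<forall>x\<in>carrier M. add M (zero M) x = x) \<and>
     (\<forall>x\<in>carrier M. \<exists>y\<in>carrier M. add M x y = zero M) \<and>
     (\<forall>a b. \<forall>x\<in>carrier M. smul M (a + b) x = add M (smul M a x) (smul M b x)) \<and>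
     (\<forall>a. \<forall>x\<in>carrier M. \<forall>y\<in>carrier M. smul M a (add M x y) = add M (smul M a x) (smul M a y)) \<and>
     (\<forall>a b. \<forall>x\<in>carrier M. smul M (a * b) x = smul M a (smul M b x)) \<and>
     (\<forall>x\<in>carrier M. smul M 1 x = x)"

definition lin_op :: "('a, 'b) rmod_scheme \<Rightarrow> ('a \<Rightarrow> 'a) \<Rightarrow> bool" where
  "lin_op M T \<longleftrightarrow> (\<forall>x\<in>carrier M. T x \<in> carrier M) \<and>
     (\<forall>x\<in>carrier M. \<forall>y\<in>carrier M. T (add M x y) = add M (T x) (T y)) \<and>
     (\<forall>a. \<forall>x\<in>carrier M. T (smul M a x) = smul M a (T x))"

text \<open>Module over R(f): EF - FE = f(H), HE - EH = E, HF - FH = -F.\<close>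
definition is_Rmod :: "complex poly \<Rightarrow> ('a, 'b) rmod_scheme \<Rightarrow> bool" where
  "is_Rmod f M \<longleftrightarrow> vspace M \<and> lin_op M (actE M) \<and> lin_op M (actF M) \<and> lin_op M (actH M) \<and>
     (\<forall>v\<in>carrier M. actE M (actF M v) = add M (actF M (actE M v)) (polyop M (actH M) f v)) \<and>
     (\<forall>v\<in>carrier M. actH M (actE M v) = add M (actE M (actH M v)) (actE M v)) \<and>
     (\<forall>v\<in>carrier M. add M (actH M (actF M v)) (actF M v) = actF M (actH M v))"

definition Omega :: "('a, 'b) rmod_scheme \<Rightarrow> complex poly \<Rightarrow> 'a \<Rightarrow> 'a" where
  "Omega M u v = add M (smul M 2 (actF M (actE M v))) (polyop M (actH M) (pcompose u [:1, 1:]) v)"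

text \<open>Z_V, identified (via Z(R) = C[Omega]) with the set of polynomials q with q(Omega) V = 0.\<close>
definition ZV :: "('a, 'b) rmod_scheme \<Rightarrow> complex poly \<Rightarrow> complex poly set" where
  "ZV M u = {q. \<forall>v\<in>carrier M. polyop M (Omega M u) q v = zero M}"

inductive_set gen :: "('a, 'b) rmod_scheme \<Rightarrow> 'a \<Rightarrow> 'a set" for M x where
  base: "x \<in> gen M x"
| zer: "zero M \<in> gen M x"
| ad: "y \<in> gen M x \<Longrightarrow> z \<in> gen M x \<Longrightarrow> add M y z \<in> gen M x"
| sm: "y \<in> gen M x \<Longrightarrow> smul M a y \<in> gen M x"
| aE: "y \<in> gen M x \<Longrightarrow> actE M y \<in> gen M x"
| aF: "y \<in> gen M x \<Longrightarrow> actF M y \<in> gen M x"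
| aH: "y \<in> gen M x \<Longrightarrow> actH M y \<in> gen M x"

definition submod :: "('a, 'b) rmod_scheme \<Rightarrow> 'a set \<Rightarrow> bool" where
  "submod M N \<longleftrightarrow> N \<subseteq> carrier M \<and> zero M \<in> N \<and>
     (\<forall>x\<in>N. \<forall>y\<in>N. add M x y \<in> N) \<and> (\<forall>a. \<forall>x\<in>N. smul M a x \<in> N) \<and>
     (\<forall>x\<in>N. actE M x \<in> N) \<and> (\<forall>x\<in>N. actF M x \<in> N) \<and> (\<forall>x\<in>N. actH M x \<in> N)"

definition coset :: "('a, 'b) rmod_scheme \<Rightarrow> 'a set \<Rightarrow> 'a \<Rightarrow> 'a set" where
  "coset M N x = {y \<in> carrier M. \<exists>n\<in>N. y = add M x n}"

definition quot :: "('a, 'b) rmod_scheme \<Rightarrow> 'a set \<Rightarrow> 'a set rmod" where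
  "quot M N = \<lparr> carrier = coset M N ` carrier M,
     zero = coset M N (zero M),
     add = (\<lambda>X Y. coset M N (add M (SOME x. x \<in> X) (SOME y. y \<in> Y))),
     smul = (\<lambda>a X. coset M N (smul M a (SOME x. x \<in> X))),
     actE = (\<lambda>X. coset M N (actE M (SOME x. x \<in> X))),
     actF = (\<lambda>X. coset M N (actF M (SOME x. x \<in> X))),
     actH = (\<lambda>X. coset M N (actH M (SOME x. x \<in> X))) \<rparr>"

definition restr :: "('a, 'b) rmod_scheme \<Rightarrow> 'a set \<Rightarrow> ('a, 'b) rmod_scheme" where
  "restr M N = M\<lparr>carrier := N\<rparr>"

text \<open>Whittaker vectors / modules of type eta, where eta is given by c = eta(E) \<noteq> 0.\<close>
definition whittaker_vector :: "('a, 'b) rmod_scheme \<Rightarrow> complex \<Rightarrow> 'a \<Rightarrow> bool" where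
  "whittaker_vector M c v \<longleftrightarrow> v \<in> carrier M \<and> actE M v = smul M c v"

definition whittaker_module_cyc :: "complex poly \<Rightarrow> ('a, 'b) rmod_scheme \<Rightarrow> complex \<Rightarrow> 'a \<Rightarrow> bool" where
  "whittaker_module_cyc f M c w \<longleftrightarrow> is_Rmod f M \<and> whittaker_vector M c w \<and> carrier M = gen M w"

definition whittaker_module :: "complex poly \<Rightarrow> ('a, 'b) rmod_scheme \<Rightarrow> complex \<Rightarrow> bool" where
  "whittaker_module f M c \<longleftrightarrow> (\<exists>w. whittaker_module_cyc f M c w)"

definition irreducible_mod :: "complex poly \<Rightarrow> ('a, 'b) rmod_scheme \<Rightarrow> bool" where
  "irreducible_mod f M \<longleftrightarrow> is_Rmod f M \<and> carrier M \<noteq> {zero M} \<and>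
     (\<forall>N. submod M N \<longrightarrow> N = {zero M} \<or> N = carrier M)"

definition comp_series :: "complex poly \<Rightarrow> ('a, 'b) rmod_scheme \<Rightarrow> 'a set list \<Rightarrow> bool" where
  "comp_series f M Vs \<longleftrightarrow> Vs \<noteq> [] \<and> hd Vs = carrier M \<and> last Vs = {zero M} \<and>
     (\<forall>i<length Vs. submod M (Vs ! i)) \<and>
     (\<forall>i. Suc i < length Vs \<longrightarrow> Vs ! Suc i \<subseteq> Vs ! i \<and>
        irreducible_mod f (quot (restr M (Vs ! i)) (Vs ! Suc i)))"

definition finite_length :: "complex poly \<Rightarrow> ('a, 'b) rmod_scheme \<Rightarrow> bool" where
  "finite_length f M \<longleftrightarrow> (\<exists>Vs. comp_series f M Vs)"

end

theory Submission
  imports Defs "HOL-Computational_Algebra.Polynomial_Factorial" "HOL-Computational_Algebra.Field_as_Ring"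
begin

text \<open>Since \<open>\<Omega>\<close> is central, each \<open>w\<^sub>i = p(\<Omega>)\<^sup>i w\<close> is again a Whittaker vector and
  \<open>V\<^sub>i = R w\<^sub>i\<close>. On a Whittaker vector \<open>E\<close> acts by a scalar and \<open>\<Omega> = 2 F E + u(H + 1)\<close> determines
  \<open>F\<close>, so \<open>R w\<^sub>i = \<complex>[\<Omega>][H] w\<^sub>i\<close>. Commuting \<open>E\<close> past \<open>P(\<Omega>, H)\<close> shifts \<open>H\<close> to \<open>H - 1\<close>,
  and finite differences then show that a submodule containing \<open>P(\<Omega>, H) w\<^sub>i\<close> contains
  \<open>q(\<Omega>) w\<^sub>i\<close> for every coefficient \<open>q\<close> of \<open>P\<close>. If \<open>V\<^sub>i\<^sub>+\<^sub>1 \<subseteq> N \<subseteq> V\<^sub>i\<close> and \<open>N \<noteq> V\<^sub>i\<^sub>+\<^sub>1\<close>, one of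
  these coefficients is prime to \<open>p\<close>, and Bezout gives \<open>w\<^sub>i \<in> N\<close>; so \<open>V\<^sub>i/V\<^sub>i\<^sub>+\<^sub>1\<close> is simple.
  It is nonzero because \<open>w\<^sub>i \<in> V\<^sub>i\<^sub>+\<^sub>1\<close> would put \<open>(1 - p q) p\<^sup>i\<close> into \<open>Z\<^sub>V = (p\<^sup>n)\<close> for some \<open>q\<close>,
  and \<open>V\<^sub>n = 0\<close> because \<open>p(\<Omega>)\<^sup>n\<close> annihilates \<open>V\<close>.\<close>

section \<open>Finite differences of polynomials\<close>

lemma coeff_linear_power_pred:
  "coeff ([:a, 1:] ^ Suc n) n = of_nat (Suc n) * (a::'a::comm_ring_1)"
proof (induction n)
  case 0 then show ?case by simp
next
  case (Suc n)
  have "[:a, 1:] ^ Suc (Suc n) = smult a ([:a, 1:] ^ Suc n) + pCons 0 ([:a, 1:] ^ Suc n)"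
    by (simp add: algebra_simps)
  moreover have "coeff ([:a, 1:] ^ Suc n) (Suc n) = 1" by (rule coeff_linear_power)
  ultimately show ?case using Suc by (simp add: algebra_simps)
qed

lemma pcompose_power: "(p ^ n) \<circ>\<^sub>p q = (p \<circ>\<^sub>p q) ^ n"
  for p q :: "'a::comm_semiring_1 poly"
  by (induction n) (simp_all add: pcompose_mult pcompose_1)

lemma degree_diff_le_of_coeff_eq:
  assumes "degree P \<le> Suc m" "degree Q \<le> Suc m" "coeff P (Suc m) = coeff Q (Suc m)"
  shows "degree (P - Q) \<le> m"
proof (rule degree_le, intro allI impI)
  fix i assume "m < i"
  then consider "i = Suc m" | "i > Suc m" by linarith
  then show "coeff (P - Q) i = 0"
    by cases (use assms in \<open>simp_all add: coeff_eq_0\<close>)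
qed

lemma degree_diff_lead_monom_le:
  "degree P = Suc m \<Longrightarrow> degree (P - monom (lead_coeff P) (Suc m)) \<le> m"
  by (rule degree_diff_le_of_coeff_eq) (simp_all add: degree_monom_le)

lemma finite_difference_leading:
  fixes P :: "'a::idom poly"
  assumes d: "degree P = Suc m"
  shows "degree (P - P \<circ>\<^sub>p [:-1, 1:]) \<le> m"
    and "coeff (P - P \<circ>\<^sub>p [:-1, 1:]) m = of_nat (Suc m) * lead_coeff P"
proof -
  let ?g = "[:-1, 1:] :: 'a poly"
  have "degree (P \<circ>\<^sub>p ?g) = Suc m" "lead_coeff (P \<circ>\<^sub>p ?g) = lead_coeff P"
    using d lead_coeff_comp[of ?g P] by (simp_all add: degree_pcompose)
  then show "degree (P - P \<circ>\<^sub>p ?g) \<le> m"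
    using d by (intro degree_diff_le_of_coeff_eq) simp_all
  define a where "a = lead_coeff P"
  define P0 where "P0 = P - monom a (Suc m)"
  have P: "P = monom a (Suc m) + P0" by (simp add: P0_def)
  have dP0: "degree P0 \<le> m" using degree_diff_lead_monom_le[OF d] by (simp add: P0_def a_def)
  have c0: "coeff (P0 \<circ>\<^sub>p ?g) m = coeff P0 m"
  proof (cases "degree P0 = m")
    case True
    then show ?thesis using lead_coeff_comp[of ?g P0] by (simp add: degree_pcompose)
  next
    case False
    then have "degree P0 < m" using dP0 by simp
    then show ?thesis by (simp add: coeff_eq_0 degree_pcompose)
  qed
  have mon: "monom a (Suc m) \<circ>\<^sub>p ?g = smult a (?g ^ Suc m)"
    by (simp add: monom_altdef pcompose_smult pcompose_power pcompose_pCons del: power_Suc)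
  have "coeff (?g ^ Suc m) m = of_nat (Suc m) * (-1)" by (rule coeff_linear_power_pred)
  then show "coeff (P - P \<circ>\<^sub>p ?g) m = of_nat (Suc m) * lead_coeff P"
    by (subst (1 2) P, simp only: pcompose_add mon coeff_diff coeff_add coeff_smult c0)
       (simp add: a_def algebra_simps)
qed

text \<open>The finite difference \<open>P - P(X - 1)\<close> has lower degree and leading coefficient
  \<open>deg P \<cdot> lead_coeff P\<close>, and \<open>deg P\<close> is invertible in characteristic 0.\<close>

lemma shift_stable_ideal_lead_coeff:
  fixes K :: "'a::field_char_0 poly poly set"
  assumes add: "\<And>P Q. P \<in> K \<Longrightarrow> Q \<in> K \<Longrightarrow> P + Q \<in> K"
    and mult: "\<And>R P. P \<in> K \<Longrightarrow> R * P \<in> K"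
    and shift: "\<And>P. P \<in> K \<Longrightarrow> P \<circ>\<^sub>p [:-1, 1:] \<in> K"
  shows "P \<in> K \<Longrightarrow> [:lead_coeff P:] \<in> K"
proof (induction "degree P" arbitrary: P rule: less_induct)
  case (less P)
  show ?case
  proof (cases "degree P")
    case 0
    then show ?thesis using less.prems by (metis degree_0_id)
  next
    case (Suc m)
    define D where "D = P - P \<circ>\<^sub>p [:-1, 1:]"
    have DK: "D \<in> K" unfolding D_def
      using add[OF less.prems mult[OF shift[OF less.prems], of "-1"]] by simp
    have cD: "coeff D m = of_nat (Suc m) * lead_coeff P"
      using finite_difference_leading(2)[OF Suc] by (simp add: D_def)
    moreover have "P \<noteq> 0" using Suc by auto
    then have "lead_coeff P \<noteq> 0" by simp
    ultimately have "coeff D m \<noteq> 0" by (simp add: of_nat_poly del: of_nat_Suc)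
    then have "degree D = m"
      using finite_difference_leading(1)[OF Suc] le_degree by (fastforce simp: D_def)
    then have "degree D < degree P" "lead_coeff D = of_nat (Suc m) * lead_coeff P"
      using Suc cD by simp_all
    then have "[:[:inverse (of_nat (Suc m)):]:] * [:of_nat (Suc m) * lead_coeff P:] \<in> K"
      using less.hyps DK by (metis mult)
    moreover have "[:[:inverse (of_nat (Suc m)):]:] * [:of_nat (Suc m) * lead_coeff P:] = [:lead_coeff P:]"
      by (simp add: of_nat_poly smult_smult field_simps del: of_nat_Suc)
    ultimately show ?thesis by simp
  qed
qed

lemma shift_stable_ideal_const_coeff:
  fixes K :: "'a::field_char_0 poly poly set"
  assumes add: "\<And>P Q. P \<in> K \<Longrightarrow> Q \<in> K \<Longrightarrow> P + Q \<in> K"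
    and mult: "\<And>R P. P \<in> K \<Longrightarrow> R * P \<in> K"
    and shift: "\<And>P. P \<in> K \<Longrightarrow> P \<circ>\<^sub>p [:-1, 1:] \<in> K"
  shows "P \<in> K \<Longrightarrow> [:coeff P k:] \<in> K"
proof (induction "degree P" arbitrary: P rule: less_induct)
  case (less P)
  have lead: "[:lead_coeff P:] \<in> K"
    using shift_stable_ideal_lead_coeff[OF add mult shift less.prems] .
  show ?case
  proof (cases "degree P")
    case 0
    then show ?thesis
      using lead mult[OF less.prems, of 0] by (cases k) (auto simp: coeff_eq_0)
  next
    case (Suc m)
    define P0 where "P0 = P - monom (lead_coeff P) (Suc m)"
    have "monom (lead_coeff P) (Suc m) = monom 1 (Suc m) * [:lead_coeff P:]"
      by (simp add: smult_monom)
    then have P0K: "P0 \<in> K" unfolding P0_def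
      using add[OF less.prems mult[OF lead, of "- monom 1 (Suc m)"]] by simp
    have dP0: "degree P0 < degree P"
      using degree_diff_lead_monom_le[OF Suc] Suc by (simp add: P0_def)
    show ?thesis
    proof (cases "k = Suc m")
      case True then show ?thesis using lead Suc by simp
    next
      case False
      then have "coeff P k = coeff P0 k" by (simp add: P0_def)
      then show ?thesis using less.hyps[OF dP0 P0K] by simp
    qed
  qed
qed

section \<open>Vector spaces and polynomial actions\<close>

locale complex_vspace =
  fixes M :: "('a, 'b) rmod_scheme"
  assumes vspace: "vspace M"
begin

lemma zero_closed [simp]: "zero M \<in> carrier M"
  using vspace by (simp add: vspace_def)

lemma add_closed [simp]: "x \<in> carrier M \<Longrightarrow> y \<in> carrier M \<Longrightarrow> add M x y \<in> carrier M"
  using vspace by (simp add: vspace_def)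

lemma smul_closed [simp]: "x \<in> carrier M \<Longrightarrow> smul M a x \<in> carrier M"
  using vspace by (simp add: vspace_def)

lemma add_assoc:
  "x \<in> carrier M \<Longrightarrow> y \<in> carrier M \<Longrightarrow> z \<in> carrier M \<Longrightarrow>
    add M (add M x y) z = add M x (add M y z)"
  using vspace unfolding vspace_def by blast

lemma add_comm: "x \<in> carrier M \<Longrightarrow> y \<in> carrier M \<Longrightarrow> add M x y = add M y x"
  using vspace unfolding vspace_def by blast

lemma add_lcomm:
  "x \<in> carrier M \<Longrightarrow> y \<in> carrier M \<Longrightarrow> z \<in> carrier M \<Longrightarrow>
    add M x (add M y z) = add M y (add M x z)"
  by (metis add_assoc add_comm)

lemma add_swap:
  "a \<in> carrier M \<Longrightarrow> b \<in> carrier M \<Longrightarrow> c \<in> carrier M \<Longrightarrow> d \<in> carrier M \<Longrightarrow>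
    add M (add M a b) (add M c d) = add M (add M a c) (add M b d)"
  by (simp add: add_assoc add_lcomm[of b c d])

lemma zero_add [simp]: "x \<in> carrier M \<Longrightarrow> add M (zero M) x = x"
  using vspace unfolding vspace_def by blast

lemma add_zero [simp]: "x \<in> carrier M \<Longrightarrow> add M x (zero M) = x"
  using add_comm[of x "zero M"] by simp

lemma smul_add_scalar: "x \<in> carrier M \<Longrightarrow> smul M (a + b) x = add M (smul M a x) (smul M b x)"
  using vspace by (simp add: vspace_def)

lemma smul_add_vector:
  "x \<in> carrier M \<Longrightarrow> y \<in> carrier M \<Longrightarrow> smul M a (add M x y) = add M (smul M a x) (smul M a y)"
  using vspace by (simp add: vspace_def)

lemma smul_smul [simp]: "x \<in> carrier M \<Longrightarrow> smul M a (smul M b x) = smul M (a * b) x"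
  using vspace by (simp add: vspace_def)

lemma smul_one [simp]: "x \<in> carrier M \<Longrightarrow> smul M 1 x = x"
  using vspace by (simp add: vspace_def)

lemma add_left_cancel:
  assumes "x \<in> carrier M" "y \<in> carrier M" "z \<in> carrier M" and "add M x y = add M x z"
  shows "y = z"
proof -
  have "\<exists>n\<in>carrier M. add M x n = zero M"
    using vspace assms(1) unfolding vspace_def by blast
  then obtain n where n: "n \<in> carrier M" "add M x n = zero M" by blast
  have "y = add M (add M n x) y" using n assms by (simp add: add_comm)
  also have "\<dots> = add M (add M n x) z" using n assms by (simp add: add_assoc)
  also have "\<dots> = z" using n assms by (simp add: add_comm)
  finally show ?thesis .
qed

lemma add_eq_self_imp_zero: "x \<in> carrier M \<Longrightarrow> y \<in> carrier M \<Longrightarrow> add M x y = x \<Longrightarrow> y = zero M"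
  using add_left_cancel[of x y "zero M"] by simp

lemma smul_zero_scalar [simp]: "x \<in> carrier M \<Longrightarrow> smul M 0 x = zero M"
  by (rule add_eq_self_imp_zero[of "smul M 0 x"]) (simp_all flip: smul_add_scalar)

lemma add_neg [simp]: "x \<in> carrier M \<Longrightarrow> add M x (smul M (-1) x) = zero M"
  using smul_add_scalar[of x 1 "-1"] by simp

lemma add_add_neg_cancel: "x \<in> carrier M \<Longrightarrow> y \<in> carrier M \<Longrightarrow> add M (add M x y) (smul M (-1) y) = x"
  by (simp add: add_assoc)

end

definition poly_act ::
  "('a, 'b) rmod_scheme \<Rightarrow> ('c::zero \<Rightarrow> 'a \<Rightarrow> 'a) \<Rightarrow> ('a \<Rightarrow> 'a) \<Rightarrow> 'c poly \<Rightarrow> 'a \<Rightarrow> 'a" where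
  "poly_act M S T q v = foldr (\<lambda>a acc. add M (S a v) (T acc)) (coeffs q) (zero M)"

lemma polyop_eq_poly_act: "polyop M T q v = poly_act M (smul M) T q v"
  by (simp add: polyop_def poly_act_def)

locale poly_action = complex_vspace M for M :: "('a, 'b) rmod_scheme" +
  fixes S :: "'c::comm_ring_1 \<Rightarrow> 'a \<Rightarrow> 'a" and T :: "'a \<Rightarrow> 'a"
  assumes S_closed [simp]: "x \<in> carrier M \<Longrightarrow> S a x \<in> carrier M"
    and S_add_scalar: "x \<in> carrier M \<Longrightarrow> S (a + b) x = add M (S a x) (S b x)"
    and S_mult: "x \<in> carrier M \<Longrightarrow> S (a * b) x = S a (S b x)"
    and S_one [simp]: "x \<in> carrier M \<Longrightarrow> S 1 x = x"
    and S_add_vector: "x \<in> carrier M \<Longrightarrow> y \<in> carrier M \<Longrightarrow> S a (add M x y) = add M (S a x) (S a y)"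
    and T_closed [simp]: "x \<in> carrier M \<Longrightarrow> T x \<in> carrier M"
    and T_add: "x \<in> carrier M \<Longrightarrow> y \<in> carrier M \<Longrightarrow> T (add M x y) = add M (T x) (T y)"
    and T_S: "x \<in> carrier M \<Longrightarrow> T (S a x) = S a (T x)"
begin

lemma S_zero_scalar [simp]: "x \<in> carrier M \<Longrightarrow> S 0 x = zero M"
  by (rule add_eq_self_imp_zero[of "S 0 x"]) (simp_all flip: S_add_scalar)

lemma S_zero_vector [simp]: "S a (zero M) = zero M"
  by (rule add_eq_self_imp_zero[of "S a (zero M)"]) (simp_all flip: S_add_vector)

lemma T_zero [simp]: "T (zero M) = zero M"
  using T_S[of "zero M" 0] by simp

lemma poly_act_closed [simp]: "v \<in> carrier M \<Longrightarrow> poly_act M S T q v \<in> carrier M"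
proof -
  assume v: "v \<in> carrier M"
  have "foldr (\<lambda>a acc. add M (S a v) (T acc)) L (zero M) \<in> carrier M" for L
    by (induction L) (simp_all add: v)
  then show ?thesis by (simp add: poly_act_def)
qed

lemma poly_act_0 [simp]: "poly_act M S T 0 v = zero M"
  by (simp add: poly_act_def)

lemma poly_act_pCons:
  "v \<in> carrier M \<Longrightarrow> poly_act M S T (pCons a q) v = add M (S a v) (T (poly_act M S T q v))"
  by (cases "a = 0 \<and> q = 0") (auto simp: poly_act_def coeffs_pCons_eq_cCons cCons_def)

lemma poly_act_const [simp]: "v \<in> carrier M \<Longrightarrow> poly_act M S T [:a:] v = S a v"
  by (simp add: poly_act_pCons)

lemma poly_act_1 [simp]: "v \<in> carrier M \<Longrightarrow> poly_act M S T 1 v = v"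
  by (simp add: one_pCons poly_act_pCons del: pCons_one)

lemma poly_act_linear: "v \<in> carrier M \<Longrightarrow> poly_act M S T [:a, b:] v = add M (S a v) (T (S b v))"
  by (simp add: poly_act_pCons)

lemma poly_act_pCons_0: "v \<in> carrier M \<Longrightarrow> poly_act M S T (pCons 0 q) v = T (poly_act M S T q v)"
  by (simp add: poly_act_pCons)

lemma poly_act_add:
  "v \<in> carrier M \<Longrightarrow> poly_act M S T (p + q) v = add M (poly_act M S T p v) (poly_act M S T q v)"
  by (induction p q rule: poly_induct2) (simp_all add: poly_act_pCons S_add_scalar T_add add_swap)

lemma poly_act_add_vector:
  "x \<in> carrier M \<Longrightarrow> y \<in> carrier M \<Longrightarrow>
    poly_act M S T q (add M x y) = add M (poly_act M S T q x) (poly_act M S T q y)"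
  by (induction q) (simp_all add: poly_act_pCons S_add_vector T_add add_swap)

lemma poly_act_S: "v \<in> carrier M \<Longrightarrow> poly_act M S T q (S a v) = S a (poly_act M S T q v)"
  by (induction q) (simp_all add: poly_act_pCons S_add_vector T_S flip: S_mult add: mult.commute)

lemma poly_act_smult: "v \<in> carrier M \<Longrightarrow> poly_act M S T (smult a q) v = S a (poly_act M S T q v)"
  by (induction q) (simp_all add: poly_act_pCons S_add_vector T_S S_mult)

lemma poly_act_mult:
  "v \<in> carrier M \<Longrightarrow> poly_act M S T (p * q) v = poly_act M S T p (poly_act M S T q v)"
  by (induction p) (simp_all add: poly_act_pCons poly_act_add poly_act_smult poly_act_pCons_0)

lemma poly_act_in_subset:
  assumes "zero M \<in> N" "\<And>x y. x \<in> N \<Longrightarrow> y \<in> N \<Longrightarrow> add M x y \<in> N"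
    "\<And>x a. x \<in> N \<Longrightarrow> S a x \<in> N" "\<And>x. x \<in> N \<Longrightarrow> T x \<in> N" "v \<in> N"
  shows "poly_act M S T q v \<in> N"
proof -
  have "foldr (\<lambda>a acc. add M (S a v) (T acc)) L (zero M) \<in> N" for L
    by (induction L) (use assms in auto)
  then show ?thesis by (simp add: poly_act_def)
qed

lemma poly_act_commute:
  assumes A_closed: "\<And>x. x \<in> carrier M \<Longrightarrow> A x \<in> carrier M"
    and A_add: "\<And>x y. x \<in> carrier M \<Longrightarrow> y \<in> carrier M \<Longrightarrow> A (add M x y) = add M (A x) (A y)"
    and A_S: "\<And>x a. x \<in> carrier M \<Longrightarrow> A (S a x) = S a (A x)"
    and A_T: "\<And>x. x \<in> carrier M \<Longrightarrow> A (T x) = T (A x)"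
    and v: "v \<in> carrier M"
  shows "A (poly_act M S T q v) = poly_act M S T q (A v)"
proof -
  have A_zero: "A (zero M) = zero M"
    using A_S[of "zero M" 0] A_closed[of "zero M"] by simp
  show ?thesis
    by (induction q) (simp_all add: poly_act_pCons A_zero A_add A_S A_T A_closed v)
qed

lemma poly_act_shift:
  assumes A_closed: "\<And>x. x \<in> carrier M \<Longrightarrow> A x \<in> carrier M"
    and A_add: "\<And>x y. x \<in> carrier M \<Longrightarrow> y \<in> carrier M \<Longrightarrow> A (add M x y) = add M (A x) (A y)"
    and A_S: "\<And>x a. x \<in> carrier M \<Longrightarrow> A (S a x) = S a (A x)"
    and A_T: "\<And>x. x \<in> carrier M \<Longrightarrow> A (T x) = add M (T (A x)) (S d (A x))"
    and v: "v \<in> carrier M"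
  shows "A (poly_act M S T q v) = poly_act M S T (q \<circ>\<^sub>p [:d, 1:]) (A v)"
  using v
proof (induction q arbitrary: v)
  case 0
  have "A (zero M) = zero M" using A_S[of "zero M" 0] A_closed[of "zero M"] by simp
  then show ?case by simp
next
  case (pCons a q)
  have "A (poly_act M S T (pCons a q) v) = add M (S a (A v)) (A (T (poly_act M S T q v)))"
    using pCons by (simp add: poly_act_pCons A_add A_S)
  also have "\<dots> = add M (S a (A v)) (add M (T (poly_act M S T (q \<circ>\<^sub>p [:d, 1:]) (A v)))
       (S d (poly_act M S T (q \<circ>\<^sub>p [:d, 1:]) (A v))))"
    using pCons by (simp add: A_T)
  also have "\<dots> = poly_act M S T (pCons a q \<circ>\<^sub>p [:d, 1:]) (A v)"
    using pCons A_closed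
    by (simp add: pcompose_pCons poly_act_add poly_act_mult poly_act_linear add_comm
        poly_act_pCons_0 poly_act_smult)
  finally show ?case .
qed

end

lemma (in complex_vspace) poly_action_smul: "lin_op M T \<Longrightarrow> poly_action M (smul M) T"
  unfolding lin_op_def by unfold_locales (simp_all add: smul_add_scalar smul_add_vector vspace)

section \<open>Modules over \<open>R(f)\<close> and the action of \<open>\<complex>[\<Omega>][H]\<close>\<close>

locale rmodule = complex_vspace M for M :: "('a, 'b) rmod_scheme" +
  fixes f u :: "complex poly"
  assumes rmod: "is_Rmod f M"
    and f_eq: "f = smult (1/2) (u \<circ>\<^sub>p [:1, 1:] - u)"

lemma rmoduleI: "is_Rmod f M \<Longrightarrow> f = smult (1/2) (u \<circ>\<^sub>p [:1, 1:] - u) \<Longrightarrow> rmodule M f u"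
  by unfold_locales (simp_all add: is_Rmod_def)

context rmodule
begin

lemma lin_E: "lin_op M (actE M)" and lin_F: "lin_op M (actF M)" and lin_H: "lin_op M (actH M)"
  using rmod by (simp_all add: is_Rmod_def)

lemma E_closed [simp]: "x \<in> carrier M \<Longrightarrow> actE M x \<in> carrier M"
  and F_closed [simp]: "x \<in> carrier M \<Longrightarrow> actF M x \<in> carrier M"
  and H_closed [simp]: "x \<in> carrier M \<Longrightarrow> actH M x \<in> carrier M"
  using lin_E lin_F lin_H by (simp_all add: lin_op_def)

lemma E_add: "x \<in> carrier M \<Longrightarrow> y \<in> carrier M \<Longrightarrow> actE M (add M x y) = add M (actE M x) (actE M y)"
  and F_add: "x \<in> carrier M \<Longrightarrow> y \<in> carrier M \<Longrightarrow> actF M (add M x y) = add M (actF M x) (actF M y)"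
  and H_add: "x \<in> carrier M \<Longrightarrow> y \<in> carrier M \<Longrightarrow> actH M (add M x y) = add M (actH M x) (actH M y)"
  using lin_E lin_F lin_H by (simp_all add: lin_op_def)

lemma E_smul: "x \<in> carrier M \<Longrightarrow> actE M (smul M a x) = smul M a (actE M x)"
  and F_smul: "x \<in> carrier M \<Longrightarrow> actF M (smul M a x) = smul M a (actF M x)"
  and H_smul: "x \<in> carrier M \<Longrightarrow> actH M (smul M a x) = smul M a (actH M x)"
  using lin_E lin_F lin_H by (simp_all add: lin_op_def)

lemma E_zero [simp]: "actE M (zero M) = zero M"
  and F_zero [simp]: "actF M (zero M) = zero M"
  using E_smul[of "zero M" 0] F_smul[of "zero M" 0] by simp_all

lemma EF_rel: "v \<in> carrier M \<Longrightarrow> actE M (actF M v) = add M (actF M (actE M v)) (polyop M (actH M) f v)"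
  and HE_rel: "v \<in> carrier M \<Longrightarrow> actH M (actE M v) = add M (actE M (actH M v)) (actE M v)"
  and HF_rel: "v \<in> carrier M \<Longrightarrow> add M (actH M (actF M v)) (actF M v) = actF M (actH M v)"
  using rmod by (simp_all add: is_Rmod_def)

lemma EH_commute: "v \<in> carrier M \<Longrightarrow> actE M (actH M v) = add M (actH M (actE M v)) (smul M (-1) (actE M v))"
  by (simp add: HE_rel add_add_neg_cancel)

lemma FH_commute: "v \<in> carrier M \<Longrightarrow> actF M (actH M v) = add M (actH M (actF M v)) (smul M 1 (actF M v))"
  by (simp add: HF_rel)

lemma HF_commute: "v \<in> carrier M \<Longrightarrow> actH M (actF M v) = add M (actF M (actH M v)) (smul M (-1) (actF M v))"
  by (simp flip: HF_rel add: add_add_neg_cancel)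

sublocale Hact: poly_action M "smul M" "actH M"
  by (rule poly_action_smul[OF lin_H])

abbreviation polyH where "polyH q v \<equiv> poly_act M (smul M) (actH M) q v"

lemma polyop_H_closed [simp]: "v \<in> carrier M \<Longrightarrow> polyop M (actH M) q v \<in> carrier M"
  by (simp add: polyop_eq_poly_act)

lemma E_polyH: "v \<in> carrier M \<Longrightarrow> actE M (polyH q v) = polyH (q \<circ>\<^sub>p [:-1, 1:]) (actE M v)"
  by (rule Hact.poly_act_shift) (simp_all add: E_add E_smul EH_commute)

lemma F_polyH: "v \<in> carrier M \<Longrightarrow> actF M (polyH q v) = polyH (q \<circ>\<^sub>p [:1, 1:]) (actF M v)"
  by (rule Hact.poly_act_shift) (simp_all add: F_add F_smul FH_commute del: smul_one)

lemma H_polyH: "v \<in> carrier M \<Longrightarrow> actH M (polyH q v) = polyH q (actH M v)"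
  by (rule Hact.poly_act_commute) (simp_all add: H_add H_smul)

abbreviation Om where "Om \<equiv> Omega M u"

lemma Omega_eq: "Om v = add M (smul M 2 (actF M (actE M v))) (polyH (u \<circ>\<^sub>p [:1, 1:]) v)"
  by (simp add: Omega_def polyop_eq_poly_act)

lemma Omega_closed [simp]: "v \<in> carrier M \<Longrightarrow> Om v \<in> carrier M"
  by (simp add: Omega_eq)

lemma Omega_add: "x \<in> carrier M \<Longrightarrow> y \<in> carrier M \<Longrightarrow> Om (add M x y) = add M (Om x) (Om y)"
  by (simp add: Omega_eq E_add F_add smul_add_vector Hact.poly_act_add_vector add_swap)

lemma Omega_smul: "x \<in> carrier M \<Longrightarrow> Om (smul M a x) = smul M a (Om x)"
  by (simp add: Omega_eq E_smul F_smul smul_add_vector Hact.poly_act_S mult.commute)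

lemma lin_Omega: "lin_op M Om"
  by (simp add: lin_op_def Omega_add Omega_smul)

lemma shift_u_eq: "u \<circ>\<^sub>p [:1, 1:] = smult 2 f + u"
  by (simp add: f_eq)

lemma shift_u_unshift: "(u \<circ>\<^sub>p [:1, 1:]) \<circ>\<^sub>p [:-1, 1:] = u"
proof -
  have "[:1, 1:] \<circ>\<^sub>p [:-1, 1:] = ([:0, 1:] :: complex poly)"
    by (simp add: pcompose_pCons)
  then show ?thesis by (simp flip: pcompose_assoc)
qed

lemma Omega_commute_H: "v \<in> carrier M \<Longrightarrow> actH M (Om v) = Om (actH M v)"
proof -
  assume v: "v \<in> carrier M"
  have "actH M (actF M (actE M v)) = add M (actF M (actH M (actE M v))) (smul M (-1) (actF M (actE M v)))"
    using v by (simp add: HF_commute)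
  also have "\<dots> = actF M (actE M (actH M v))"
    using v by (simp add: HE_rel F_add add_add_neg_cancel)
  finally show ?thesis using v by (simp add: Omega_eq H_add H_smul H_polyH)
qed

lemma Omega_commute_E: "v \<in> carrier M \<Longrightarrow> actE M (Om v) = Om (actE M v)"
proof -
  assume v: "v \<in> carrier M"
  let ?x = "actE M v"
  have x: "?x \<in> carrier M" using v by simp
  have "actE M (Om v) = add M (smul M 2 (actE M (actF M ?x))) (polyH u ?x)"
    using v by (simp add: Omega_eq E_add E_smul E_polyH shift_u_unshift)
  also have "\<dots> = add M (smul M 2 (actF M (actE M ?x))) (add M (smul M 2 (polyH f ?x)) (polyH u ?x))"
    using x by (simp add: EF_rel polyop_eq_poly_act smul_add_vector add_assoc)
  also have "add M (smul M 2 (polyH f ?x)) (polyH u ?x) = polyH (u \<circ>\<^sub>p [:1, 1:]) ?x"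
    using x by (simp add: shift_u_eq Hact.poly_act_add Hact.poly_act_smult)
  finally show ?thesis by (simp add: Omega_eq)
qed

lemma Omega_commute_F: "v \<in> carrier M \<Longrightarrow> actF M (Om v) = Om (actF M v)"
proof -
  assume v: "v \<in> carrier M"
  let ?y = "actF M v"
  have y: "?y \<in> carrier M" using v by simp
  have "Om ?y = add M (smul M 2 (actF M (add M (actF M (actE M v)) (polyH f v)))) (polyH (u \<circ>\<^sub>p [:1, 1:]) ?y)"
    using v by (simp add: Omega_eq EF_rel polyop_eq_poly_act)
  also have "\<dots> = add M (smul M 2 (actF M (actF M (actE M v))))
      (add M (smul M 2 (polyH (f \<circ>\<^sub>p [:1, 1:]) ?y)) (polyH (u \<circ>\<^sub>p [:1, 1:]) ?y))"
    using v by (simp add: F_add F_polyH smul_add_vector add_assoc)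
  also have "add M (smul M 2 (polyH (f \<circ>\<^sub>p [:1, 1:]) ?y)) (polyH (u \<circ>\<^sub>p [:1, 1:]) ?y)
      = polyH ((u \<circ>\<^sub>p [:1, 1:]) \<circ>\<^sub>p [:1, 1:]) ?y"
    using y by (simp add: shift_u_eq pcompose_add pcompose_smult Hact.poly_act_add Hact.poly_act_smult)
  finally show ?thesis using v by (simp add: Omega_eq F_add F_smul F_polyH)
qed

sublocale Omact: poly_action M "smul M" Om
  by (rule poly_action_smul[OF lin_Omega])

abbreviation polyOm where "polyOm q v \<equiv> poly_act M (smul M) Om q v"

lemma polyop_Omega: "polyop M Om q v = polyOm q v"
  by (simp add: polyop_eq_poly_act)

lemma E_polyOm: "v \<in> carrier M \<Longrightarrow> actE M (polyOm q v) = polyOm q (actE M v)"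
  by (rule Omact.poly_act_commute) (simp_all add: E_add E_smul Omega_commute_E)

lemma F_polyOm: "v \<in> carrier M \<Longrightarrow> actF M (polyOm q v) = polyOm q (actF M v)"
  by (rule Omact.poly_act_commute) (simp_all add: F_add F_smul Omega_commute_F)

lemma H_polyOm: "v \<in> carrier M \<Longrightarrow> actH M (polyOm q v) = polyOm q (actH M v)"
  by (rule Omact.poly_act_commute) (simp_all add: H_add H_smul Omega_commute_H)

lemma smul_polyOm: "v \<in> carrier M \<Longrightarrow> smul M c (polyOm q v) = polyOm q (smul M c v)"
  by (rule Omact.poly_act_commute) (simp_all add: smul_add_vector Omega_smul mult.commute)

lemma polyOm_minus_one: "v \<in> carrier M \<Longrightarrow> polyOm (-1) v = smul M (-1) v"
  using Omact.poly_act_smult[of v "-1" 1] by (simp only: smult_minus_left smult_1_left Omact.poly_act_1)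

sublocale OmHact: poly_action M polyOm "actH M"
  by unfold_locales
    (simp_all add: Omact.poly_act_add Omact.poly_act_mult Omact.poly_act_add_vector H_add H_polyOm)

text \<open>\<open>polyOmH P\<close> is \<open>P(\<Omega>, H)\<close> for \<open>P \<in> \<complex>[\<Omega>][H]\<close>, the coefficients of \<open>P\<close> being
  polynomials in \<open>\<Omega>\<close>.\<close>

abbreviation polyOmH where "polyOmH P v \<equiv> poly_act M polyOm (actH M) P v"

lemma E_polyOmH: "v \<in> carrier M \<Longrightarrow> actE M (polyOmH P v) = polyOmH (P \<circ>\<^sub>p [:-1, 1:]) (actE M v)"
  by (rule OmHact.poly_act_shift) (simp_all add: E_add E_polyOm EH_commute polyOm_minus_one)

lemma F_polyOmH: "v \<in> carrier M \<Longrightarrow> actF M (polyOmH P v) = polyOmH (P \<circ>\<^sub>p [:1, 1:]) (actF M v)"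
  by (rule OmHact.poly_act_shift) (simp_all add: F_add F_polyOm FH_commute)

lemma smul_polyOmH: "v \<in> carrier M \<Longrightarrow> smul M c (polyOmH P v) = polyOmH P (smul M c v)"
  by (rule OmHact.poly_act_commute) (simp_all add: smul_add_vector smul_polyOm H_smul mult.commute)

lemma polyOmH_const_coeffs: "v \<in> carrier M \<Longrightarrow> polyOmH (map_poly (\<lambda>a. [:a:]) q) v = polyH q v"
  by (induction q) (simp_all add: map_poly_pCons OmHact.poly_act_pCons Hact.poly_act_pCons)

lemma gen_subset_carrier: "x \<in> carrier M \<Longrightarrow> gen M x \<subseteq> carrier M"
proof
  fix y assume x: "x \<in> carrier M" and "y \<in> gen M x"
  from this(2) show "y \<in> carrier M" by (induction rule: gen.induct) (simp_all add: x)
qed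

lemma submod_gen: "x \<in> carrier M \<Longrightarrow> submod M (gen M x)"
  using gen_subset_carrier by (auto simp: submod_def intro: gen.intros)

lemma gen_least: assumes "submod M N" "x \<in> N" shows "gen M x \<subseteq> N"
proof
  fix y assume "y \<in> gen M x"
  then show "y \<in> N" by (induction rule: gen.induct) (use assms in \<open>auto simp: submod_def\<close>)
qed

lemma submod_zero: "submod M {zero M}"
  by (simp add: submod_def)

lemma gen_zero: "gen M (zero M) = {zero M}"
  using gen_least[OF submod_zero singletonI] gen.zer by auto

lemma submodD:
  assumes "submod M N"
  shows "N \<subseteq> carrier M" "zero M \<in> N" "\<And>x y. x \<in> N \<Longrightarrow> y \<in> N \<Longrightarrow> add M x y \<in> N"
    "\<And>x a. x \<in> N \<Longrightarrow> smul M a x \<in> N" "\<And>x. x \<in> N \<Longrightarrow> actE M x \<in> N"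
    "\<And>x. x \<in> N \<Longrightarrow> actF M x \<in> N" "\<And>x. x \<in> N \<Longrightarrow> actH M x \<in> N"
  using assms by (auto simp: submod_def)

lemma submod_polyH: "submod M N \<Longrightarrow> v \<in> N \<Longrightarrow> polyH q v \<in> N"
  by (rule Hact.poly_act_in_subset) (auto dest: submodD)

lemma submod_Omega: "submod M N \<Longrightarrow> v \<in> N \<Longrightarrow> Om v \<in> N"
  by (simp add: Omega_eq submodD submod_polyH)

lemma submod_polyOm: "submod M N \<Longrightarrow> v \<in> N \<Longrightarrow> polyOm q v \<in> N"
  by (rule Omact.poly_act_in_subset) (auto dest: submodD submod_Omega)

lemma submod_polyOmH: "submod M N \<Longrightarrow> v \<in> N \<Longrightarrow> polyOmH P v \<in> N"
  by (rule OmHact.poly_act_in_subset) (auto dest: submodD submod_polyOm)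

section \<open>Whittaker vectors\<close>

lemma F_Whittaker_eq_polyOmH:
  assumes y: "whittaker_vector M c y" and c: "c \<noteq> 0"
  shows "\<exists>Q. actF M y = polyOmH Q y"
proof -
  have yc: "y \<in> carrier M" and Ey: "actE M y = smul M c y"
    using y by (simp_all add: whittaker_vector_def)
  define Q0 where "Q0 = [:[:0, 1:]:] + smult (-1) (map_poly (\<lambda>a. [:a:]) (u \<circ>\<^sub>p [:1, 1:]))"
  have "polyOmH Q0 y = add M (polyOmH [:[:0, 1:]:] y)
      (polyOm (-1) (polyOmH (map_poly (\<lambda>a. [:a:]) (u \<circ>\<^sub>p [:1, 1:])) y))"
    unfolding Q0_def by (simp only: OmHact.poly_act_add[OF yc] OmHact.poly_act_smult[OF yc])
  also have "\<dots> = add M (Om y) (smul M (-1) (polyH (u \<circ>\<^sub>p [:1, 1:]) y))"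
    using yc by (simp add: polyOmH_const_coeffs polyOm_minus_one Omact.poly_act_linear)
  also have "Om y = add M (smul M (2 * c) (actF M y)) (polyH (u \<circ>\<^sub>p [:1, 1:]) y)"
    using yc by (simp add: Omega_eq Ey F_smul)
  finally have "polyOmH Q0 y = smul M (2 * c) (actF M y)"
    using yc by (simp add: add_add_neg_cancel)
  then have "polyOmH (smult [:1 / (2 * c):] Q0) y = actF M y"
    using yc c by (simp add: OmHact.poly_act_smult)
  then show ?thesis by (intro exI[of _ "smult [:1 / (2 * c):] Q0"]) simp
qed

lemma gen_Whittaker_eq_polyOmH:
  assumes y: "whittaker_vector M c y" and c: "c \<noteq> 0" and x: "x \<in> gen M y"
  shows "\<exists>P. x = polyOmH P y"
  using x
proof (induction rule: gen.induct)
  have yc: "y \<in> carrier M" and Ey: "actE M y = smul M c y"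
    using y by (simp_all add: whittaker_vector_def)
  {
    case base
    then show ?case using yc by (intro exI[of _ 1]) simp
  next
    case zer
    then show ?case by (intro exI[of _ 0]) simp
  next
    case (ad a b)
    then obtain P Q where "a = polyOmH P y" "b = polyOmH Q y" by blast
    then show ?case using yc by (intro exI[of _ "P + Q"]) (simp add: OmHact.poly_act_add)
  next
    case (sm a b)
    then obtain P where "a = polyOmH P y" by blast
    then show ?case using yc by (intro exI[of _ "smult [:b:] P"]) (simp add: OmHact.poly_act_smult)
  next
    case (aE a)
    then obtain P where "a = polyOmH P y" by blast
    then show ?case using yc
      by (intro exI[of _ "smult [:c:] (P \<circ>\<^sub>p [:-1, 1:])"])
        (simp add: OmHact.poly_act_smult E_polyOmH Ey smul_polyOmH)
  next
    case (aF a)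
    then obtain P where P: "a = polyOmH P y" by blast
    obtain Q where Q: "actF M y = polyOmH Q y" using F_Whittaker_eq_polyOmH[OF y c] by blast
    show ?case using yc P Q
      by (intro exI[of _ "(P \<circ>\<^sub>p [:1, 1:]) * Q"]) (simp add: OmHact.poly_act_mult F_polyOmH)
  next
    case (aH a)
    then obtain P where "a = polyOmH P y" by blast
    then show ?case using yc by (intro exI[of _ "pCons 0 P"]) (simp add: OmHact.poly_act_pCons_0)
  }
qed

text \<open>Conjugation by \<open>E\<close> shifts \<open>H\<close> to \<open>H - 1\<close>, so \<open>{P. P(\<Omega>, H) y \<in> N}\<close> is an ideal stable
  under this shift.\<close>

lemma polyOmH_in_submod_coeff:
  assumes y: "whittaker_vector M c y" and c: "c \<noteq> 0"
    and N: "submod M N" and P: "polyOmH P y \<in> N"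
  shows "polyOm (coeff P k) y \<in> N"
proof -
  have yc: "y \<in> carrier M" and Ey: "actE M y = smul M c y"
    using y by (simp_all add: whittaker_vector_def)
  let ?K = "{P. polyOmH P y \<in> N}"
  have "[:coeff P k:] \<in> ?K"
  proof (rule shift_stable_ideal_const_coeff)
    show "P \<in> ?K" using P by simp
  next
    fix P Q assume "P \<in> ?K" "Q \<in> ?K"
    then show "P + Q \<in> ?K" using yc N by (simp add: OmHact.poly_act_add submodD)
  next
    fix R P assume "P \<in> ?K"
    then show "R * P \<in> ?K" using yc N by (simp add: OmHact.poly_act_mult submod_polyOmH)
  next
    fix P assume "P \<in> ?K"
    then have "smul M (1 / c) (actE M (polyOmH P y)) \<in> N" using N by (simp add: submodD)
    moreover have "smul M (1 / c) (actE M (polyOmH P y)) = polyOmH (P \<circ>\<^sub>p [:-1, 1:]) y"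
      using yc c by (simp add: E_polyOmH Ey flip: smul_polyOmH)
    ultimately show "P \<circ>\<^sub>p [:-1, 1:] \<in> ?K" by simp
  qed
  then show ?thesis using yc by simp
qed

lemma polyOmH_in_submod_if_coeffs:
  assumes y: "y \<in> carrier M" and N: "submod M N" and coeffs: "\<And>k. polyOm (coeff P k) y \<in> N"
  shows "polyOmH P y \<in> N"
  using coeffs
proof (induction P)
  case 0 then show ?case using N by (simp add: submodD)
next
  case (pCons a P)
  have "polyOm a y \<in> N" using pCons.prems[of 0] by simp
  moreover have "polyOmH P y \<in> N" using pCons.IH pCons.prems by (metis coeff_pCons_Suc)
  ultimately show ?case using y N by (simp add: OmHact.poly_act_pCons submodD)
qed

lemma Whittaker_in_gen_polyOm:
  assumes y: "whittaker_vector M c y" and c: "c \<noteq> 0" and in_gen: "y \<in> gen M (polyOm p y)"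
  shows "\<exists>q. polyOm (1 - p * q) y = zero M"
proof -
  have yc: "y \<in> carrier M" and Ey: "actE M y = smul M c y"
    using y by (simp_all add: whittaker_vector_def)
  have y': "whittaker_vector M c (polyOm p y)"
    using yc by (simp add: whittaker_vector_def E_polyOm Ey smul_polyOm)
  obtain P where P: "y = polyOmH P (polyOm p y)"
    using gen_Whittaker_eq_polyOmH[OF y' c in_gen] by blast
  have "polyOmH (P * [:p:]) y = y"
    by (simp only: OmHact.poly_act_mult[OF yc] OmHact.poly_act_const[OF yc] flip: P)
  then have "polyOmH (1 + smult (-1) (P * [:p:])) y = zero M"
    by (simp only: OmHact.poly_act_add[OF yc] OmHact.poly_act_smult[OF yc] OmHact.poly_act_1[OF yc]
        polyOm_minus_one[OF yc] add_neg[OF yc])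
  then have "polyOm (coeff (1 + smult (-1) (P * [:p:])) 0) y \<in> {zero M}"
    by (intro polyOmH_in_submod_coeff[OF y c submod_zero]) simp
  then show ?thesis by (intro exI[of _ "coeff P 0"]) (simp add: mult.commute)
qed

lemma Whittaker_gen_polyOm_absorb:
  assumes y: "whittaker_vector M c y" and c: "c \<noteq> 0" and p: "prime_elem p"
    and N: "submod M N" and pyN: "polyOm p y \<in> N"
    and x: "x \<in> gen M y" "x \<in> N" "x \<notin> gen M (polyOm p y)"
  shows "y \<in> N"
proof -
  have yc: "y \<in> carrier M" using y by (simp add: whittaker_vector_def)
  let ?B = "gen M (polyOm p y)"
  have sB: "submod M ?B" using yc by (simp add: submod_gen)
  obtain P where P: "x = polyOmH P y" using gen_Whittaker_eq_polyOmH[OF y c x(1)] by blast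
  obtain k where k: "\<not> p dvd coeff P k"
  proof (rule ccontr)
    assume "\<not> thesis"
    then have "p dvd coeff P k" for k using that by blast
    then have "polyOm (coeff P k) y \<in> ?B" for k
      using yc submod_polyOm[OF sB gen.base, of "coeff P k div p"]
      by (simp flip: Omact.poly_act_mult)
    then have "x \<in> ?B" using polyOmH_in_submod_if_coeffs[OF yc sB] P by blast
    then show False using x(3) by simp
  qed
  have coeffN: "polyOm (coeff P k) y \<in> N"
    using polyOmH_in_submod_coeff[OF y c N] x(2) P by simp
  have "coprime p (coeff P k)" using prime_elem_imp_coprime[OF p k] .
  then obtain s t where st: "s * p + t * coeff P k = 1"
    using bezout_coefficients_fst_snd[of p "coeff P k"] by (auto simp: coprime_imp_gcd_eq_1)
  have "y = polyOm (s * p + t * coeff P k) y" using yc by (simp add: st)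
  also have "\<dots> = add M (polyOm s (polyOm p y)) (polyOm t (polyOm (coeff P k) y))"
    using yc by (simp add: Omact.poly_act_add Omact.poly_act_mult)
  also have "\<dots> \<in> N"
    using N pyN coeffN by (simp add: submodD submod_polyOm)
  finally show ?thesis .
qed

end

section \<open>Restriction to a submodule and quotients\<close>

lemma restr_simps [simp]:
  "carrier (restr M A) = A" "zero (restr M A) = zero M" "add (restr M A) = add M"
  "smul (restr M A) = smul M" "actE (restr M A) = actE M" "actF (restr M A) = actF M"
  "actH (restr M A) = actH M"
  by (simp_all add: restr_def)

lemma gen_restr [simp]: "gen (restr M A) x = gen M x"
proof -
  have "y \<in> gen M x" if "y \<in> gen (restr M A) x" for y
    using that by induction (auto intro: gen.intros)
  moreover have "y \<in> gen (restr M A) x" if "y \<in> gen M x" for y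
    using that by induction (auto intro: gen.intros[where M = "restr M A", simplified])
  ultimately show ?thesis by blast
qed

lemma submod_restr: "A \<subseteq> carrier M \<Longrightarrow> submod (restr M A) N \<longleftrightarrow> submod M N \<and> N \<subseteq> A"
  by (auto simp: submod_def)

lemma (in rmodule) rmodule_restr:
  assumes A: "submod M A"
  shows "rmodule (restr M A) f u"
proof (rule rmoduleI[OF _ f_eq])
  note sA = submodD[OF A]
  have sub: "\<And>x. x \<in> A \<Longrightarrow> x \<in> carrier M" using sA(1) by blast
  have "vspace (restr M A)"
    unfolding vspace_def restr_simps
  proof (intro conjI ballI allI)
    fix x assume x: "x \<in> A"
    show "\<exists>y\<in>A. add M x y = zero M"
      using x sA(4)[OF x, of "-1"] add_neg[OF sub[OF x]] by blast
  next
    fix x y z assume "x \<in> A" "y \<in> A" "z \<in> A"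
    then show "add M (add M x y) z = add M x (add M y z)" using sub add_assoc by blast
  next
    fix x y assume "x \<in> A" "y \<in> A"
    then show "add M x y = add M y x" using sub add_comm by blast
  qed (use sA sub in \<open>simp_all add: smul_add_scalar smul_add_vector\<close>)
  moreover have "lin_op (restr M A) (actE M)" "lin_op (restr M A) (actF M)" "lin_op (restr M A) (actH M)"
    unfolding lin_op_def restr_simps using sA sub
    by (simp_all add: E_add F_add H_add E_smul F_smul H_smul)
  ultimately show "is_Rmod f (restr M A)"
    unfolding is_Rmod_def using sub by (simp add: EF_rel HE_rel HF_rel polyop_def restr_def)
qed

locale quotient_rmodule = rmodule +
  fixes B
  assumes submod_B: "submod M B"
begin

abbreviation cs where "cs x \<equiv> coset M B x"

abbreviation Q where "Q \<equiv> quot M B"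

lemma B_closed: "x \<in> B \<Longrightarrow> x \<in> carrier M"
  using submodD(1)[OF submod_B] by blast

lemma coset_self: "x \<in> carrier M \<Longrightarrow> x \<in> cs x"
  unfolding coset_def using submodD(2)[OF submod_B] by force

lemma coset_eq:
  assumes x: "x \<in> carrier M" and y: "y \<in> cs x"
  shows "cs y = cs x"
proof -
  obtain n where n: "n \<in> B" "y = add M x n" using y unfolding coset_def by blast
  have nc: "n \<in> carrier M" using B_closed n(1) .
  show ?thesis
  proof
    show "cs y \<subseteq> cs x"
    proof
      fix z assume "z \<in> cs y"
      then obtain m where m: "m \<in> B" "z = add M y m" and zc: "z \<in> carrier M"
        unfolding coset_def by blast
      have "z = add M x (add M n m)" using m n x nc B_closed[OF m(1)] by (simp add: add_assoc)
      then show "z \<in> cs x" unfolding coset_def using zc submodD(3)[OF submod_B n(1) m(1)] by blast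
    qed
  next
    show "cs x \<subseteq> cs y"
    proof
      fix z assume "z \<in> cs x"
      then obtain m where m: "m \<in> B" "z = add M x m" and zc: "z \<in> carrier M"
        unfolding coset_def by blast
      have mc: "m \<in> carrier M" using B_closed m(1) .
      have "add M n (add M (smul M (-1) n) m) = m" using nc mc by (simp flip: add_assoc)
      then have "z = add M y (add M (smul M (-1) n) m)" using x nc mc n m(2) by (simp add: add_assoc)
      moreover have "add M (smul M (-1) n) m \<in> B"
        using submodD[OF submod_B] n(1) m(1) by blast
      ultimately show "z \<in> cs y" unfolding coset_def using zc by blast
    qed
  qed
qed

lemma coset_eq_zero_iff: "x \<in> carrier M \<Longrightarrow> cs x = cs (zero M) \<longleftrightarrow> x \<in> B"
proof
  assume x: "x \<in> carrier M" and "cs x = cs (zero M)"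
  then have "x \<in> cs (zero M)" using coset_self by blast
  then show "x \<in> B" unfolding coset_def using B_closed by auto
next
  assume x: "x \<in> carrier M" and "x \<in> B"
  then have "x \<in> cs (zero M)" unfolding coset_def by (auto intro!: bexI[of _ x])
  then show "cs x = cs (zero M)" by (rule coset_eq[OF zero_closed])
qed

lemma coset_respects:
  assumes g_closed: "\<And>x. x \<in> carrier M \<Longrightarrow> g x \<in> carrier M"
    and g_add: "\<And>x y. x \<in> carrier M \<Longrightarrow> y \<in> carrier M \<Longrightarrow> g (add M x y) = add M (g x) (g y)"
    and g_B: "\<And>x. x \<in> B \<Longrightarrow> g x \<in> B"
    and x: "x \<in> carrier M" and y: "y \<in> cs x"
  shows "cs (g y) = cs (g x)"
proof -
  obtain n where n: "n \<in> B" "y = add M x n" using y unfolding coset_def by blast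
  have "g y = add M (g x) (g n)" using n x B_closed g_add by simp
  then have "g y \<in> cs (g x)" unfolding coset_def using g_closed x g_B n B_closed by auto
  then show ?thesis by (rule coset_eq[OF g_closed[OF x]])
qed

lemma coset_respects_add:
  assumes x: "x \<in> carrier M" and y: "y \<in> carrier M" and x': "x' \<in> cs x" and y': "y' \<in> cs y"
  shows "cs (add M x' y') = cs (add M x y)"
proof -
  obtain n where n: "n \<in> B" "x' = add M x n" using x' unfolding coset_def by blast
  obtain m where m: "m \<in> B" "y' = add M y m" using y' unfolding coset_def by blast
  have "add M x' y' = add M (add M x y) (add M n m)" using n m x y B_closed by (simp add: add_swap)
  then have "add M x' y' \<in> cs (add M x y)"
    unfolding coset_def using x y n m B_closed submodD(3)[OF submod_B] by auto
  then show ?thesis by (rule coset_eq[OF add_closed[OF x y]])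
qed

lemma quot_carrier: "carrier Q = cs ` carrier M"
  and quot_zero: "zero Q = cs (zero M)"
  by (simp_all add: quot_def)

lemma quot_add: "x \<in> carrier M \<Longrightarrow> y \<in> carrier M \<Longrightarrow> add Q (cs x) (cs y) = cs (add M x y)"
  unfolding quot_def by (simp, rule coset_respects_add) (auto intro: someI coset_self)

lemma quot_smul: "x \<in> carrier M \<Longrightarrow> smul Q a (cs x) = cs (smul M a x)"
  unfolding quot_def
  by (simp, rule coset_respects) (auto simp: smul_add_vector submodD[OF submod_B] intro: someI coset_self)

lemma quot_E: "x \<in> carrier M \<Longrightarrow> actE Q (cs x) = cs (actE M x)"
  unfolding quot_def
  by (simp, rule coset_respects) (auto simp: E_add submodD[OF submod_B] intro: someI coset_self)

lemma quot_F: "x \<in> carrier M \<Longrightarrow> actF Q (cs x) = cs (actF M x)"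
  unfolding quot_def
  by (simp, rule coset_respects) (auto simp: F_add submodD[OF submod_B] intro: someI coset_self)

lemma quot_H: "x \<in> carrier M \<Longrightarrow> actH Q (cs x) = cs (actH M x)"
  unfolding quot_def
  by (simp, rule coset_respects) (auto simp: H_add submodD[OF submod_B] intro: someI coset_self)

lemma quot_polyop_H: "v \<in> carrier M \<Longrightarrow> polyop Q (actH Q) q (cs v) = cs (polyop M (actH M) q v)"
proof -
  assume v: "v \<in> carrier M"
  have "foldr (\<lambda>a acc. add Q (smul Q a (cs v)) (actH Q acc)) L (zero Q)
      = cs (foldr (\<lambda>a acc. add M (smul M a v) (actH M acc)) L (zero M))
    \<and> foldr (\<lambda>a acc. add M (smul M a v) (actH M acc)) L (zero M) \<in> carrier M" for L
    by (induction L) (simp_all add: quot_zero quot_add quot_smul quot_H v)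
  then show ?thesis by (simp add: polyop_def)
qed

lemma quot_cases: "X \<in> carrier Q \<Longrightarrow> (\<And>x. x \<in> carrier M \<Longrightarrow> X = cs x \<Longrightarrow> P) \<Longrightarrow> P"
  by (auto simp: quot_carrier)

lemma vspace_quot: "vspace Q"
  unfolding vspace_def
proof (intro conjI ballI allI)
  fix X assume "X \<in> carrier Q"
  then show "\<exists>Y\<in>carrier Q. add Q X Y = zero Q"
  proof (elim quot_cases)
    fix x assume x: "x \<in> carrier M" and X: "X = cs x"
    show ?thesis
      by (rule bexI[of _ "cs (smul M (-1) x)"]) (simp_all add: X x quot_add quot_zero quot_carrier)
  qed
next
  fix X Y Z assume "X \<in> carrier Q" "Y \<in> carrier Q" "Z \<in> carrier Q"
  then show "add Q (add Q X Y) Z = add Q X (add Q Y Z)"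
    by (elim quot_cases) (simp add: quot_add add_assoc)
next
  fix X Y assume "X \<in> carrier Q" "Y \<in> carrier Q"
  then show "add Q X Y = add Q Y X" by (elim quot_cases) (simp add: quot_add add_comm)
next
  fix a b X assume "X \<in> carrier Q"
  then show "smul Q (a + b) X = add Q (smul Q a X) (smul Q b X)"
    by (elim quot_cases) (simp add: quot_add quot_smul smul_add_scalar)
next
  fix a X Y assume "X \<in> carrier Q" "Y \<in> carrier Q"
  then show "smul Q a (add Q X Y) = add Q (smul Q a X) (smul Q a Y)"
    by (elim quot_cases) (simp add: quot_add quot_smul smul_add_vector)
qed (auto elim!: quot_cases simp: quot_carrier quot_zero quot_add quot_smul)

lemma rmodule_quot: "rmodule Q f u"
proof (rule rmoduleI[OF _ f_eq])
  have "lin_op Q (actE Q)" "lin_op Q (actF Q)" "lin_op Q (actH Q)"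
    unfolding lin_op_def
    by (auto elim!: quot_cases simp: quot_add quot_smul quot_E quot_F quot_H E_add F_add H_add
        E_smul F_smul H_smul quot_carrier)
  moreover have "\<forall>V\<in>carrier Q. actE Q (actF Q V) = add Q (actF Q (actE Q V)) (polyop Q (actH Q) f V)"
    by (auto elim!: quot_cases simp: quot_add quot_E quot_F quot_polyop_H EF_rel)
  moreover have "\<forall>V\<in>carrier Q. actH Q (actE Q V) = add Q (actE Q (actH Q V)) (actE Q V)"
    by (auto elim!: quot_cases simp: quot_add quot_E quot_H HE_rel)
  moreover have "\<forall>V\<in>carrier Q. add Q (actH Q (actF Q V)) (actF Q V) = actF Q (actH Q V)"
    by (auto elim!: quot_cases simp: quot_add quot_F quot_H HF_rel)
  ultimately show "is_Rmod f Q" unfolding is_Rmod_def using vspace_quot by blast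
qed

lemma submod_quot_preimage:
  assumes N: "submod Q N"
  shows "submod M {z \<in> carrier M. cs z \<in> N}"
proof -
  interpret Q: rmodule Q f u by (rule rmodule_quot)
  note N' = Q.submodD[OF N]
  show ?thesis
    unfolding submod_def
  proof (intro conjI ballI allI)
    show "zero M \<in> {z \<in> carrier M. cs z \<in> N}" using N'(2) by (simp add: quot_zero)
  next
    fix x y assume "x \<in> {z \<in> carrier M. cs z \<in> N}" "y \<in> {z \<in> carrier M. cs z \<in> N}"
    then show "add M x y \<in> {z \<in> carrier M. cs z \<in> N}" using N'(3)[of "cs x" "cs y"] by (simp add: quot_add)
  next
    fix a x assume "x \<in> {z \<in> carrier M. cs z \<in> N}"
    then show "smul M a x \<in> {z \<in> carrier M. cs z \<in> N}" using N'(4)[of "cs x" a] by (simp add: quot_smul)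
  next
    fix x assume "x \<in> {z \<in> carrier M. cs z \<in> N}"
    then show "actE M x \<in> {z \<in> carrier M. cs z \<in> N}"
      and "actF M x \<in> {z \<in> carrier M. cs z \<in> N}"
      and "actH M x \<in> {z \<in> carrier M. cs z \<in> N}"
      using N'(5-7)[of "cs x"] by (simp_all add: quot_E quot_F quot_H)
  qed auto
qed

lemma irreducible_quotI:
  assumes proper: "x \<in> carrier M" "x \<notin> B"
    and maximal: "\<And>N x. submod M N \<Longrightarrow> B \<subseteq> N \<Longrightarrow> x \<in> N \<Longrightarrow> x \<notin> B \<Longrightarrow> carrier M \<subseteq> N"
  shows "irreducible_mod f Q"
  unfolding irreducible_mod_def
proof (intro conjI allI impI)
  interpret Q: rmodule Q f u by (rule rmodule_quot)
  show "is_Rmod f Q" by (rule Q.rmod)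
  have "cs x \<in> carrier Q" using proper(1) by (simp add: quot_carrier)
  moreover have "cs x \<noteq> zero Q" using proper coset_eq_zero_iff[of x] by (simp add: quot_zero)
  ultimately show "carrier Q \<noteq> {zero Q}" by blast
  fix N assume N: "submod Q N"
  show "N = {zero Q} \<or> N = carrier Q"
  proof (cases "N = {zero Q}")
    case False
    then obtain X where X: "X \<in> N" "X \<noteq> zero Q" using Q.submodD(2)[OF N] by blast
    then obtain y where y: "y \<in> carrier M" "X = cs y"
      using Q.submodD(1)[OF N] by (auto simp: quot_carrier)
    let ?N' = "{z \<in> carrier M. cs z \<in> N}"
    have "carrier M \<subseteq> ?N'"
    proof (rule maximal[OF submod_quot_preimage[OF N]])
      show "B \<subseteq> ?N'"
      proof
        fix b assume "b \<in> B"
        then have "b \<in> carrier M" "cs b = zero Q"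
          using B_closed coset_eq_zero_iff[of b] by (simp_all add: quot_zero)
        then show "b \<in> ?N'" using Q.submodD(2)[OF N] by simp
      qed
      show "y \<in> ?N'" using X y by simp
      show "y \<notin> B" using X y coset_eq_zero_iff[of y] by (simp add: quot_zero)
    qed
    then show ?thesis using Q.submodD(1)[OF N] by (auto simp: quot_carrier)
  qed simp
qed

lemma quot_gen_coset:
  assumes y: "carrier M = gen M y"
  shows "carrier Q = gen Q (cs y)"
proof
  interpret Q: rmodule Q f u by (rule rmodule_quot)
  have gen_closed: "\<And>z. z \<in> gen M y \<Longrightarrow> z \<in> carrier M" using y by simp
  have yc: "y \<in> carrier M" using gen_closed[OF gen.base] .
  show "gen Q (cs y) \<subseteq> carrier Q"
    using yc by (intro Q.gen_subset_carrier) (simp add: quot_carrier)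
  have "cs z \<in> gen Q (cs y)" if "z \<in> gen M y" for z
    using that
  proof (induction rule: gen.induct)
    case base then show ?case by (rule gen.base)
  next
    case zer then show ?case using gen.zer[of Q "cs y"] by (simp add: quot_zero)
  next
    case (ad a b)
    then have "a \<in> carrier M" "b \<in> carrier M" using gen_closed by blast+
    then show ?case using gen.ad[OF ad.IH] by (simp add: quot_add)
  next
    case (sm a b)
    then have "a \<in> carrier M" using gen_closed by blast
    then show ?case using gen.sm[OF sm.IH, of b] by (simp add: quot_smul)
  next
    case (aE a)
    then have "a \<in> carrier M" using gen_closed by blast
    then show ?case using gen.aE[OF aE.IH] by (simp add: quot_E)
  next
    case (aF a)
    then have "a \<in> carrier M" using gen_closed by blast
    then show ?case using gen.aF[OF aF.IH] by (simp add: quot_F)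
  next
    case (aH a)
    then have "a \<in> carrier M" using gen_closed by blast
    then show ?case using gen.aH[OF aH.IH] by (simp add: quot_H)
  qed
  then show "carrier Q \<subseteq> gen Q (cs y)" by (auto simp: quot_carrier y)
qed

end

section \<open>Cyclic Whittaker modules with primary central annihilator\<close>

locale cyclic_whittaker = rmodule M f u for M :: "('a, 'b) rmod_scheme" and f u +
  fixes c w p n
  assumes c_nonzero: "c \<noteq> 0"
    and w_whittaker: "whittaker_vector M c w"
    and cyclic: "carrier M = gen M w"
    and p_irreducible: "irreducible p"
    and annihilator: "ZV M u = {q. p ^ n dvd q}"
begin

lemma w_closed [simp]: "w \<in> carrier M"
  using w_whittaker by (simp add: whittaker_vector_def)

definition wpow where "wpow i = polyOm (p ^ i) w"

abbreviation factor where "factor i \<equiv> quot (restr M (gen M (wpow i))) (gen M (wpow (Suc i)))"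

lemma wpow_closed [simp]: "wpow i \<in> carrier M"
  by (simp add: wpow_def)

lemma wpow_whittaker: "whittaker_vector M c (wpow i)"
  using w_whittaker by (simp add: whittaker_vector_def wpow_def E_polyOm smul_polyOm)

lemma wpow_0: "wpow 0 = w"
  by (simp add: wpow_def)

lemma wpow_Suc: "wpow (Suc i) = polyOm p (wpow i)"
  by (simp add: wpow_def Omact.poly_act_mult)

lemma gen_wpow_Suc_subset: "gen M (wpow (Suc i)) \<subseteq> gen M (wpow i)"
  by (rule gen_least[OF submod_gen[OF wpow_closed]])
    (simp add: wpow_Suc submod_polyOm[OF submod_gen[OF wpow_closed]] gen.base)

lemma annihilator_dvd: assumes "polyOm q w = zero M" shows "p ^ n dvd q"
proof -
  let ?N = "{v \<in> carrier M. polyOm q v = zero M}"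
  have "submod M ?N"
    unfolding submod_def
    by (auto simp: Omact.poly_act_add_vector Omact.poly_act_S
        simp flip: E_polyOm F_polyOm H_polyOm)
  moreover have "w \<in> ?N" using assms by simp
  ultimately have "carrier M \<subseteq> ?N" unfolding cyclic by (rule gen_least)
  then have "q \<in> ZV M u" by (auto simp: ZV_def polyop_Omega)
  then show ?thesis using annihilator by simp
qed

lemma wpow_n: "wpow n = zero M"
proof -
  have "p ^ n \<in> ZV M u" using annihilator by simp
  then show ?thesis by (simp add: ZV_def polyop_Omega wpow_def)
qed

lemma wpow_notin_gen_wpow_Suc:
  assumes i: "i < n"
  shows "wpow i \<notin> gen M (wpow (Suc i))"
proof
  assume "wpow i \<in> gen M (wpow (Suc i))"
  then obtain q where "polyOm (1 - p * q) (wpow i) = zero M"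
    using Whittaker_in_gen_polyOm[OF wpow_whittaker c_nonzero] by (auto simp: wpow_Suc)
  then have "p ^ n dvd (1 - p * q) * p ^ i"
    by (intro annihilator_dvd) (simp add: wpow_def Omact.poly_act_mult)
  moreover have "p ^ Suc i dvd p ^ n" by (rule le_imp_power_dvd) (use i in simp)
  ultimately have "p ^ i * p dvd p ^ i * (1 - p * q)"
    by (metis dvd_trans mult.commute power_Suc2)
  then have "p dvd 1 - p * q"
    using p_irreducible by (auto simp: irreducible_def)
  then have "p dvd 1" by (metis dvd_add dvd_triv_left diff_add_cancel)
  then show False using p_irreducible by (simp add: irreducible_def)
qed

lemma quotient_rmodule_factor:
  "quotient_rmodule (restr M (gen M (wpow i))) f u (gen M (wpow (Suc i)))"
proof (rule quotient_rmodule.intro[OF rmodule_restr[OF submod_gen[OF wpow_closed]]])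
  show "quotient_rmodule_axioms (restr M (gen M (wpow i))) (gen M (wpow (Suc i)))"
    by unfold_locales
      (simp add: submod_restr gen_subset_carrier submod_gen gen_wpow_Suc_subset)
qed

lemma factor_irreducible:
  assumes i: "i < n"
  shows "irreducible_mod f (factor i)"
proof -
  interpret Q: quotient_rmodule "restr M (gen M (wpow i))" f u "gen M (wpow (Suc i))"
    by (rule quotient_rmodule_factor)
  show ?thesis
  proof (rule Q.irreducible_quotI)
    show "wpow i \<in> carrier (restr M (gen M (wpow i)))" by (simp add: gen.base)
    show "wpow i \<notin> gen M (wpow (Suc i))" using i by (rule wpow_notin_gen_wpow_Suc)
    fix N x
    assume N: "submod (restr M (gen M (wpow i))) N" and BN: "gen M (wpow (Suc i)) \<subseteq> N"
      and x: "x \<in> N" "x \<notin> gen M (wpow (Suc i))"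
    have sN: "submod M N" and NA: "N \<subseteq> gen M (wpow i)"
      using N by (simp_all add: submod_restr gen_subset_carrier)
    have "wpow i \<in> N"
    proof (rule Whittaker_gen_polyOm_absorb[OF wpow_whittaker c_nonzero _ sN])
      show "prime_elem p" using p_irreducible by (simp add: prime_elem_iff_irreducible)
      show "polyOm p (wpow i) \<in> N" using subsetD[OF BN gen.base] by (simp add: wpow_Suc)
      show "x \<in> gen M (wpow i)" using NA x(1) by blast
      show "x \<in> N" "x \<notin> gen M (polyOm p (wpow i))" using x by (simp_all flip: wpow_Suc)
    qed
    then show "carrier (restr M (gen M (wpow i))) \<subseteq> N" using gen_least[OF sN] by simp
  qed
qed

lemma factor_whittaker: "whittaker_module f (factor i) c"
proof -
  interpret Q: quotient_rmodule "restr M (gen M (wpow i))" f u "gen M (wpow (Suc i))"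
    by (rule quotient_rmodule_factor)
  have yA: "wpow i \<in> gen M (wpow i)" by (rule gen.base)
  show ?thesis
    unfolding whittaker_module_def whittaker_module_cyc_def
  proof (intro exI conjI)
    show "is_Rmod f (factor i)" using Q.rmodule_quot by (rule rmodule.rmod)
    show "whittaker_vector (factor i) c (Q.cs (wpow i))"
      using yA wpow_whittaker
      by (simp add: whittaker_vector_def Q.quot_carrier Q.quot_E[simplified] Q.quot_smul[simplified])
    show "carrier (factor i) = gen (factor i) (Q.cs (wpow i))"
      by (rule Q.quot_gen_coset) simp
  qed
qed

end

lemma comp_seriesI:
  assumes "Vs 0 = carrier M" "Vs n = {zero M}" "\<And>i. i \<le> n \<Longrightarrow> submod M (Vs i)"
    and "\<And>i. i < n \<Longrightarrow> Vs (Suc i) \<subseteq> Vs i"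
    and "\<And>i. i < n \<Longrightarrow> irreducible_mod f (quot (restr M (Vs i)) (Vs (Suc i)))"
  shows "comp_series f M (map Vs [0..<Suc n])"
  using assms by (simp add: comp_series_def hd_map last_map less_Suc_eq_le del: upt_Suc)

theorem mainTheorem11:
  fixes f u p :: "complex poly" and V :: "'a rmod" and c :: complex and w :: 'a and n :: nat
  assumes hu: "f = smult (1/2) (pcompose u [:1, 1:] - u)"
    and hc: "c \<noteq> 0"
    and hV: "whittaker_module_cyc f V c w"
    and hp: "irreducible p"
    and hn: "n \<ge> 1"
    and hZ: "ZV V u = {q. p ^ n dvd q}"
  shows "(\<forall>i<n. whittaker_module f
              (quot (restr V (gen V (polyop V (Omega V u) (p ^ i) w)))
                    (gen V (polyop V (Omega V u) (p ^ Suc i) w))) c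
           \<and> irreducible_mod f
              (quot (restr V (gen V (polyop V (Omega V u) (p ^ i) w)))
                    (gen V (polyop V (Omega V u) (p ^ Suc i) w))))
       \<and> comp_series f V (map (\<lambda>i. gen V (polyop V (Omega V u) (p ^ i) w)) [0..<Suc n])
       \<and> finite_length f V"
proof -
  interpret cyclic_whittaker V f u c w p n
    using hV hc hp hZ
    by (intro cyclic_whittaker.intro rmoduleI[OF _ hu] cyclic_whittaker_axioms.intro)
      (simp_all add: whittaker_module_cyc_def)
  have V_i: "gen V (polyop V (Omega V u) (p ^ i) w) = gen V (wpow i)" for i
    by (simp add: polyop_Omega wpow_def)
  have "comp_series f V (map (\<lambda>i. gen V (wpow i)) [0..<Suc n])"
    by (rule comp_seriesI)
      (simp_all add: wpow_0 wpow_n gen_zero submod_gen gen_wpow_Suc_subset factor_irreducible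
        flip: cyclic)
  then show ?thesis
    unfolding V_i using factor_irreducible factor_whittaker by (auto simp: finite_length_def)
qed

end
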